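(* Let $(M^n)_{n\in\mathbb{N}}$ be a sequence of nonnegative matrices in $\mathbb{R}^{p\times q}_+$ converging (entrywise) to $M\in\mathbb{R}^{p\times q}_+$, and suppose $\operatorname{rank}_{\mathrm{psd}}(M^n)\le k$ for all $n$. Then $\operatorname{rank}_{\mathrm{psd}}(M)\le k$.
   Context: $\mathcal{S}^k_+$ denotes the cone of $k\times k$ real symmetric positive semidefinite matrices, with inner product $\langle A,B\rangle = \operatorname{trace}(AB)$. A psd factorization of size $k$ of a nonnegative matrix $M\in\mathbb{R}^{p\times q}_+$ is a collection $A_1,\dots,A_p, B_1,\dots,B_q \in \mathcal{S}^k_+$ with $M_{ij} = \langle A_i, B_j\rangle$ for all $i,j$; the psd rank $\operatorname{rank}_{\mathrm{psd}}(M)$ is the smallest $k$ for which such a factorization exists. *)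

theory Defs
  imports Complex_Main
begin

text \<open>Matrices are represented as functions nat => nat => real, only the entries
  with indices below the stated dimensions being relevant.\<close>

definition psd_mat :: "nat \<Rightarrow> (nat \<Rightarrow> nat \<Rightarrow> real) \<Rightarrow> bool" where
  "psd_mat k A \<longleftrightarrow>
     (\<forall>i<k. \<forall>j<k. A i j = A j i) \<and>
     (\<forall>x :: nat \<Rightarrow> real. 0 \<le> (\<Sum>i<k. \<Sum>j<k. x i * A i j * x j))"

definition trace_inner :: "nat \<Rightarrow> (nat \<Rightarrow> nat \<Rightarrow> real) \<Rightarrow> (nat \<Rightarrow> nat \<Rightarrow> real) \<Rightarrow> real" where
  "trace_inner k A B = (\<Sum>i<k. \<Sum>j<k. A i j * B j i)"

definition nonneg_mat :: "nat \<Rightarrow> nat \<Rightarrow> (nat \<Rightarrow> nat \<Rightarrow> real) \<Rightarrow> bool" where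
  "nonneg_mat p q M \<longleftrightarrow> (\<forall>i<p. \<forall>j<q. 0 \<le> M i j)"

definition has_psd_factorization :: "nat \<Rightarrow> nat \<Rightarrow> nat \<Rightarrow> (nat \<Rightarrow> nat \<Rightarrow> real) \<Rightarrow> bool" where
  "has_psd_factorization k p q M \<longleftrightarrow>
     (\<exists>A B :: nat \<Rightarrow> nat \<Rightarrow> nat \<Rightarrow> real.
        (\<forall>i<p. psd_mat k (A i)) \<and> (\<forall>j<q. psd_mat k (B j)) \<and>
        (\<forall>i<p. \<forall>j<q. M i j = trace_inner k (A i) (B j)))"

definition psd_rank :: "nat \<Rightarrow> nat \<Rightarrow> (nat \<Rightarrow> nat \<Rightarrow> real) \<Rightarrow> nat" where
  "psd_rank p q M = (LEAST k. has_psd_factorization k p q M)"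

end

theory Submission
  imports Defs "HOL-Analysis.Analysis"
begin

(* Idea: a factorization of size k can always be normalized so that all its entries are
   bounded in terms of M alone.  Writing S = A_1 + ... + A_p, a congruence
   A_i |-> G A_i G^T, B_j |-> H B_j H^T with H^T G = I preserves psd-ness and all traces
   <A_i, B_j>.  Symmetric Gaussian elimination followed by diagonal scaling turns S into a
   diagonal 0/1 matrix D.  Then every A_i is bounded by 1 (since A_i <= D on the diagonal),
   and after deleting rows/columns of B_j outside the support of D, <D, B_j> = sum_i M_ij
   bounds every entry of B_j.  For a convergent sequence M^n these bounds are uniform in n,
   so a subsequence of the factorizations converges entrywise; psd-ness and the trace
   identities pass to the limit, giving a size-k factorization of M. *)

lemma sum_single_term:
  fixes f :: "nat \<Rightarrow> real"
  assumes "r < k" "\<And>j. j < k \<Longrightarrow> j \<noteq> r \<Longrightarrow> f j = 0"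
  shows "(\<Sum>j<k. f j) = f r"
proof -
  have "(\<Sum>j<k. f j) = (\<Sum>j\<in>{r}. f j)"
    by (rule sum.mono_neutral_right) (use assms in auto)
  then show ?thesis by simp
qed

lemma sum_two_terms:
  fixes f :: "nat \<Rightarrow> real"
  assumes "r < k" "s < k" "r \<noteq> s" "\<And>j. j \<noteq> r \<Longrightarrow> j \<noteq> s \<Longrightarrow> f j = 0"
  shows "(\<Sum>j<k. f j) = f r + f s"
proof -
  have "(\<Sum>j<k. f j) = (\<Sum>j\<in>{r,s}. f j)"
    by (rule sum.mono_neutral_right) (use assms in auto)
  then show ?thesis using assms by simp
qed

lemma sum_times_elim_column:
  assumes "j < (k::nat)" "m < k"
  shows "(\<Sum>b<k. f b * ((if j = b then 1 else 0) + c * (if b = m then 1 else 0))) = f j + c * (f m :: real)"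
proof -
  have "(\<Sum>b<k. f b * ((if j = b then 1 else 0) + c * (if b = m then 1 else 0)))
      = (\<Sum>b<k. (if b = j then f b else 0) + c * (if b = m then f b else 0))"
    by (intro sum.cong) (auto simp: algebra_simps)
  also have "\<dots> = f j + c * f m"
    using assms by (simp add: sum.distrib sum_distrib_left[symmetric] sum.delta)
  finally show ?thesis .
qed

lemma sum_elim_column_times:
  assumes "j < (k::nat)" "m < k"
  shows "(\<Sum>b<k. ((if j = b then 1 else 0) + c * (if b = m then 1 else 0)) * f b) = f j + c * (f m :: real)"
  using sum_times_elim_column[OF assms, of f c] by (simp add: mult.commute)

lemma sum_swap_inner_outer:
  "(\<Sum>i\<in>I. \<Sum>j\<in>J. \<Sum>a\<in>K. \<Sum>b\<in>L. f i j a b) = (\<Sum>a\<in>K. \<Sum>b\<in>L. \<Sum>i\<in>I. \<Sum>j\<in>J. f i j a b :: real)"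
proof -
  have "(\<Sum>i\<in>I. \<Sum>j\<in>J. \<Sum>a\<in>K. \<Sum>b\<in>L. f i j a b) = (\<Sum>i\<in>I. \<Sum>a\<in>K. \<Sum>j\<in>J. \<Sum>b\<in>L. f i j a b)"
    by (rule sum.cong[OF refl], rule sum.swap)
  also have "\<dots> = (\<Sum>a\<in>K. \<Sum>i\<in>I. \<Sum>j\<in>J. \<Sum>b\<in>L. f i j a b)" by (rule sum.swap)
  also have "\<dots> = (\<Sum>a\<in>K. \<Sum>i\<in>I. \<Sum>b\<in>L. \<Sum>j\<in>J. f i j a b)"
    by (rule sum.cong[OF refl], rule sum.cong[OF refl], rule sum.swap)
  also have "\<dots> = (\<Sum>a\<in>K. \<Sum>b\<in>L. \<Sum>i\<in>I. \<Sum>j\<in>J. f i j a b)"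
    by (rule sum.cong[OF refl], rule sum.swap)
  finally show ?thesis .
qed

subsection \<open>Entries of positive semidefinite matrices\<close>

text \<open>The diagonal of a psd matrix is nonnegative (test with x = e_r).\<close>

lemma psd_diag_nonneg:
  assumes "psd_mat k A" "r < k"
  shows "0 \<le> A r r"
proof -
  define x where "x = (\<lambda>i::nat. if i = r then 1 else (0::real))"
  have "0 \<le> (\<Sum>i<k. \<Sum>j<k. x i * A i j * x j)" using assms unfolding psd_mat_def by blast
  also have "(\<Sum>i<k. \<Sum>j<k. x i * A i j * x j) = (\<Sum>j<k. x r * A r j * x j)"
    by (rule sum_single_term) (use assms in \<open>auto simp: x_def\<close>)
  also have "\<dots> = x r * A r r * x r"
    by (rule sum_single_term) (use assms in \<open>auto simp: x_def\<close>)
  finally show ?thesis by (simp add: x_def)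
qed

lemma psd_quadratic_form_2:
  assumes "psd_mat k A" "r < k" "s < k" "r \<noteq> s"
  shows "0 \<le> u * u * A r r + 2 * u * v * A r s + v * v * A s s"
proof -
  define x where "x = (\<lambda>i::nat. if i = r then u else if i = s then v else (0::real))"
  have sym: "A s r = A r s" using assms unfolding psd_mat_def by auto
  have "0 \<le> (\<Sum>i<k. \<Sum>j<k. x i * A i j * x j)" using assms unfolding psd_mat_def by blast
  also have "(\<Sum>i<k. \<Sum>j<k. x i * A i j * x j) = (\<Sum>j<k. x r * A r j * x j) + (\<Sum>j<k. x s * A s j * x j)"
    by (rule sum_two_terms) (use assms in \<open>auto simp: x_def\<close>)
  also have "(\<Sum>j<k. x r * A r j * x j) = x r * A r r * x r + x r * A r s * x s"
    by (rule sum_two_terms) (use assms in \<open>auto simp: x_def\<close>)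
  also have "(\<Sum>j<k. x s * A s j * x j) = x s * A s r * x r + x s * A s s * x s"
    by (rule sum_two_terms) (use assms in \<open>auto simp: x_def\<close>)
  finally show ?thesis using assms sym by (simp add: x_def algebra_simps)
qed

lemma psd_entry_sq_le:
  assumes "psd_mat k A" "r < k" "s < k"
  shows "(A r s)^2 \<le> A r r * A s s"
proof (cases "r = s")
  case True then show ?thesis by (simp add: power2_eq_square)
next
  case False
  note q = psd_quadratic_form_2[OF assms False]
  have d: "0 \<le> A r r" "0 \<le> A s s" using psd_diag_nonneg assms by auto
  show ?thesis
  proof (cases "A s s = 0")
    case True
    have "A r s = 0"
    proof (rule ccontr)
      assume h: "A r s \<noteq> 0"
      define v where "v = -(A r r + 1) / (2 * A r s)"
      have "0 \<le> 1 * 1 * A r r + 2 * 1 * v * A r s + v * v * A s s" by (rule q)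
      also have "\<dots> = -1" using h True by (simp add: v_def field_simps)
      finally show False by simp
    qed
    then show ?thesis using d True by simp
  next
    case False
    have "0 \<le> A s s * A s s * A r r + 2 * A s s * (- A r s) * A r s + (- A r s) * (- A r s) * A s s"
      by (rule q)
    also have "\<dots> = A s s * (A r r * A s s - (A r s)^2)" by (simp add: algebra_simps power2_eq_square)
    finally have "0 \<le> A r r * A s s - (A r s)^2" using False d by (simp add: zero_le_mult_iff)
    then show ?thesis by simp
  qed
qed

lemma psd_zero_diag_row:
  assumes "psd_mat k A" "r < k" "s < k" "A r r = 0"
  shows "A r s = 0" "A s r = 0"
proof -
  have "(A r s)^2 \<le> 0" using psd_entry_sq_le[OF assms(1-3)] assms(4) by simp
  then show "A r s = 0" by simp
  then show "A s r = 0" using assms unfolding psd_mat_def by auto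
qed

lemma psd_entry_abs_le:
  assumes "psd_mat k A" "r < k" "s < k" "A r r \<le> C" "A s s \<le> C"
  shows "\<bar>A r s\<bar> \<le> C"
proof -
  have d: "0 \<le> A r r" "0 \<le> A s s" using psd_diag_nonneg assms by auto
  have "(A r s)^2 \<le> A r r * A s s" by (rule psd_entry_sq_le[OF assms(1-3)])
  also have "\<dots> \<le> C * C" using d assms by (intro mult_mono) auto
  finally have "\<bar>A r s\<bar>^2 \<le> C^2" by (simp add: power2_eq_square)
  moreover have "0 \<le> C" using d assms by linarith
  ultimately show ?thesis using power2_le_imp_le by blast
qed

lemma psd_diagonal:
  assumes "\<And>a. a < k \<Longrightarrow> 0 \<le> d a"
  shows "psd_mat k (\<lambda>a b. if a = b then d a else 0)"
  unfolding psd_mat_def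
proof (intro conjI allI impI)
  fix x :: "nat \<Rightarrow> real"
  have "(\<Sum>a<k. \<Sum>b<k. x a * (if a = b then d a else 0) * x b) = (\<Sum>a<k. d a * (x a * x a))"
    by (intro sum.cong refl) (simp add: if_distrib[of "\<lambda>y. _ * y"] if_distrib[of "\<lambda>y. y * _"] cong: if_cong)
  also have "0 \<le> \<dots>" using assms by (intro sum_nonneg mult_nonneg_nonneg zero_le_square) auto
  finally show "0 \<le> (\<Sum>a<k. \<Sum>b<k. x a * (if a = b then d a else 0) * x b)" .
qed auto

lemma trace_inner_diagonal:
  "trace_inner k (\<lambda>a b. if a = b then d a else 0) X = (\<Sum>a<k. d a * X a a)"
  unfolding trace_inner_def by (intro sum.cong refl) (simp add: if_distrib[of "\<lambda>y. y * _"] cong: if_cong)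

lemma psd_restrict:
  assumes "psd_mat k X"
  shows "psd_mat k (\<lambda>a b. if P a \<or> P b then 0 else X a b)"
  unfolding psd_mat_def
proof (intro conjI allI impI)
  fix a b assume "a < k" "b < k"
  then show "(if P a \<or> P b then 0 else X a b) = (if P b \<or> P a then 0 else X b a)"
    using assms unfolding psd_mat_def by auto
next
  fix x :: "nat \<Rightarrow> real"
  define y where "y = (\<lambda>a. if P a then 0 else x a)"
  have "(\<Sum>a<k. \<Sum>b<k. x a * (if P a \<or> P b then 0 else X a b) * x b) = (\<Sum>a<k. \<Sum>b<k. y a * X a b * y b)"
    unfolding y_def by (intro sum.cong refl) auto
  also have "0 \<le> \<dots>" using assms unfolding psd_mat_def by blast
  finally show "0 \<le> (\<Sum>a<k. \<Sum>b<k. x a * (if P a \<or> P b then 0 else X a b) * x b)" .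
qed

definition mat_sum :: "nat \<Rightarrow> (nat \<Rightarrow> nat \<Rightarrow> nat \<Rightarrow> real) \<Rightarrow> nat \<Rightarrow> nat \<Rightarrow> real" where
  "mat_sum p A = (\<lambda>a b. \<Sum>i<p. A i a b)"

lemma psd_mat_sum:
  assumes "\<And>i. i < p \<Longrightarrow> psd_mat k (A i)"
  shows "psd_mat k (mat_sum p A)"
  unfolding psd_mat_def
proof (intro conjI allI impI)
  fix a b assume "a < k" "b < k"
  then show "mat_sum p A a b = mat_sum p A b a" using assms unfolding mat_sum_def psd_mat_def
    by (intro sum.cong) auto
next
  fix x :: "nat \<Rightarrow> real"
  have "(\<Sum>a<k. \<Sum>b<k. x a * mat_sum p A a b * x b) = (\<Sum>a<k. \<Sum>b<k. \<Sum>i<p. x a * A i a b * x b)"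
    unfolding mat_sum_def by (simp add: sum_distrib_left sum_distrib_right)
  also have "\<dots> = (\<Sum>a<k. \<Sum>i<p. \<Sum>b<k. x a * A i a b * x b)"
    by (rule sum.cong[OF refl], rule sum.swap)
  also have "\<dots> = (\<Sum>i<p. \<Sum>a<k. \<Sum>b<k. x a * A i a b * x b)"
    by (rule sum.swap)
  also have "0 \<le> \<dots>" by (rule sum_nonneg) (use assms in \<open>auto simp: psd_mat_def\<close>)
  finally show "0 \<le> (\<Sum>a<k. \<Sum>b<k. x a * mat_sum p A a b * x b)" .
qed

lemma psd_diag_le_mat_sum:
  assumes "\<And>i. i < p \<Longrightarrow> psd_mat k (A i)" "i < p" "a < k"
  shows "A i a a \<le> mat_sum p A a a"
  unfolding mat_sum_def by (rule member_le_sum) (use assms psd_diag_nonneg in auto)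

lemma psd_summand_vanishes:
  assumes psd: "\<And>i. i < p \<Longrightarrow> psd_mat k (A i)" and i: "i < p" and ab: "a < k" "b < k"
    and zero: "mat_sum p A a a = 0 \<or> mat_sum p A b b = 0"
  shows "A i a b = 0"
proof -
  have diag_zero: "A i c c = 0" if "mat_sum p A c c = 0" "c < k" for c
    using psd_diag_le_mat_sum[where A=A, OF psd i \<open>c < k\<close>] psd_diag_nonneg[OF psd[OF i] \<open>c < k\<close>] that by simp
  from zero show ?thesis
  proof
    assume "mat_sum p A a a = 0"
    then show ?thesis using psd_zero_diag_row(1)[OF psd[OF i] ab] diag_zero ab by auto
  next
    assume "mat_sum p A b b = 0"
    then show ?thesis using psd_zero_diag_row(2)[OF psd[OF i] ab(2,1)] diag_zero ab by auto
  qed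
qed

lemma trace_inner_mat_sum:
  "(\<Sum>i<p. trace_inner k (A i) X) = trace_inner k (mat_sum p A) X"
proof -
  have "(\<Sum>i<p. trace_inner k (A i) X) = (\<Sum>i<p. \<Sum>a<k. \<Sum>b<k. A i a b * X b a)"
    unfolding trace_inner_def ..
  also have "\<dots> = (\<Sum>a<k. \<Sum>i<p. \<Sum>b<k. A i a b * X b a)" by (rule sum.swap)
  also have "\<dots> = (\<Sum>a<k. \<Sum>b<k. \<Sum>i<p. A i a b * X b a)"
    by (rule sum.cong[OF refl], rule sum.swap)
  also have "\<dots> = trace_inner k (mat_sum p A) X"
    unfolding trace_inner_def mat_sum_def by (simp add: sum_distrib_right)
  finally show ?thesis .
qed

subsection \<open>Congruences\<close>

lemma mult_indicator: "(x::real) * (if P then 1 else 0) = (if P then x else 0)"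
  by simp

definition congr_mat :: "nat \<Rightarrow> (nat \<Rightarrow> nat \<Rightarrow> real) \<Rightarrow> (nat \<Rightarrow> nat \<Rightarrow> real) \<Rightarrow> (nat \<Rightarrow> nat \<Rightarrow> real)" where
  "congr_mat k G X = (\<lambda>i j. \<Sum>a<k. \<Sum>b<k. G i a * X a b * G j b)"

text \<open>If H^T G = I then the pair of congruences by G and H preserves the trace inner
  product, since tr(G A G^T H B H^T) = tr(A (G^T H) B (H^T G)).\<close>

lemma congr_mat_trace_inner:
  assumes inv: "\<And>b c. b < k \<Longrightarrow> c < k \<Longrightarrow> (\<Sum>j<k. G j b * H j c) = (if b = c then 1 else 0)"
  shows "trace_inner k (congr_mat k G A) (congr_mat k H B) = trace_inner k A B"
proof -
  have inner: "(\<Sum>i<k. \<Sum>j<k. G i a * G j b * congr_mat k H B j i) = B b a" if ab: "a < k" "b < k" for a b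
  proof -
    have "(\<Sum>i<k. \<Sum>j<k. G i a * G j b * congr_mat k H B j i)
        = (\<Sum>i<k. \<Sum>j<k. \<Sum>c<k. \<Sum>d<k. B c d * ((G j b * H j c) * (G i a * H i d)))"
      by (simp add: congr_mat_def sum_distrib_left mult_ac)
    also have "\<dots> = (\<Sum>c<k. \<Sum>d<k. \<Sum>i<k. \<Sum>j<k. B c d * ((G j b * H j c) * (G i a * H i d)))"
      by (rule sum_swap_inner_outer)
    also have "\<dots> = (\<Sum>c<k. \<Sum>d<k. \<Sum>j<k. \<Sum>i<k. B c d * ((G j b * H j c) * (G i a * H i d)))"
      by (rule sum.cong[OF refl], rule sum.cong[OF refl], rule sum.swap)
    also have "\<dots> = (\<Sum>c<k. \<Sum>d<k. B c d * ((\<Sum>j<k. G j b * H j c) * (\<Sum>i<k. G i a * H i d)))"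
      by (simp add: sum_distrib_left sum_distrib_right mult_ac)
    also have "\<dots> = (\<Sum>c<k. \<Sum>d<k. B c d * ((if b = c then 1 else 0) * (if a = d then 1 else 0)))"
      using ab by (intro sum.cong refl) (simp add: inv)
    also have "\<dots> = (\<Sum>c<k. if c = b then (\<Sum>d<k. if d = a then B c d else 0) else 0)"
      by (rule sum.cong[OF refl]) (auto intro!: sum.cong simp: mult_indicator)
    also have "\<dots> = B b a"
      using ab by simp
    finally show ?thesis .
  qed
  have "trace_inner k (congr_mat k G A) (congr_mat k H B)
      = (\<Sum>i<k. \<Sum>j<k. \<Sum>a<k. \<Sum>b<k. A a b * (G i a * G j b * congr_mat k H B j i))"
    unfolding trace_inner_def by (simp add: congr_mat_def sum_distrib_right mult_ac)
  also have "\<dots> = (\<Sum>a<k. \<Sum>b<k. \<Sum>i<k. \<Sum>j<k. A a b * (G i a * G j b * congr_mat k H B j i))"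
    by (rule sum_swap_inner_outer)
  also have "\<dots> = (\<Sum>a<k. \<Sum>b<k. A a b * (\<Sum>i<k. \<Sum>j<k. G i a * G j b * congr_mat k H B j i))"
    by (simp add: sum_distrib_left)
  also have "\<dots> = (\<Sum>a<k. \<Sum>b<k. A a b * B b a)"
    by (intro sum.cong refl) (simp add: inner)
  finally show ?thesis unfolding trace_inner_def .
qed

text \<open>x^T (G A G^T) x = y^T A y with y = G^T x.\<close>

lemma congr_mat_psd:
  assumes "psd_mat k A"
  shows "psd_mat k (congr_mat k G A)"
  unfolding psd_mat_def
proof (intro conjI allI impI)
  fix i j assume "i < k" "j < k"
  have "congr_mat k G A j i = (\<Sum>b<k. \<Sum>a<k. G j a * A a b * G i b)"
    unfolding congr_mat_def by (rule sum.swap)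
  also have "\<dots> = (\<Sum>a<k. \<Sum>b<k. G i a * A a b * G j b)"
    using assms unfolding psd_mat_def by (intro sum.cong refl) auto
  finally show "congr_mat k G A i j = congr_mat k G A j i" unfolding congr_mat_def by simp
next
  fix x :: "nat \<Rightarrow> real"
  define y where "y = (\<lambda>a. \<Sum>i<k. x i * G i a)"
  have "(\<Sum>i<k. \<Sum>j<k. x i * congr_mat k G A i j * x j)
      = (\<Sum>i<k. \<Sum>j<k. \<Sum>a<k. \<Sum>b<k. (x i * G i a) * A a b * (G j b * x j))"
    unfolding congr_mat_def by (intro sum.cong refl) (simp add: sum_distrib_left sum_distrib_right mult.assoc)
  also have "\<dots> = (\<Sum>a<k. \<Sum>b<k. \<Sum>i<k. \<Sum>j<k. (x i * G i a) * A a b * (G j b * x j))"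
    by (rule sum_swap_inner_outer)
  also have "\<dots> = (\<Sum>a<k. \<Sum>b<k. y a * A a b * y b)"
    unfolding y_def by (simp add: sum_distrib_left sum_distrib_right sum_product mult_ac)
  finally show "0 \<le> (\<Sum>i<k. \<Sum>j<k. x i * congr_mat k G A i j * x j)"
    using assms unfolding psd_mat_def by simp
qed

lemma mat_sum_congr_mat: "mat_sum p (\<lambda>i. congr_mat k G (A i)) = congr_mat k G (mat_sum p A)"
proof (intro ext)
  fix x y
  have "congr_mat k G (mat_sum p A) x y = (\<Sum>a<k. \<Sum>b<k. \<Sum>i<p. G x a * A i a b * G y b)"
    unfolding congr_mat_def mat_sum_def by (simp add: sum_distrib_left sum_distrib_right)
  also have "\<dots> = (\<Sum>a<k. \<Sum>i<p. \<Sum>b<k. G x a * A i a b * G y b)"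
    by (rule sum.cong[OF refl], rule sum.swap)
  also have "\<dots> = (\<Sum>i<p. \<Sum>a<k. \<Sum>b<k. G x a * A i a b * G y b)"
    by (rule sum.swap)
  finally show "mat_sum p (\<lambda>i. congr_mat k G (A i)) x y = congr_mat k G (mat_sum p A) x y"
    unfolding congr_mat_def mat_sum_def by simp
qed

lemma congr_mat_diagonal:
  assumes "i < k" "j < k"
  shows "congr_mat k (\<lambda>i a. if i = a then g i else 0) X i j = g i * X i j * g j"
proof -
  have inner: "(\<Sum>b<k. (if i = a then g i else 0) * X a b * (if j = b then g j else 0))
      = (if a = i then g i * X a j * g j else 0)" for a
  proof -
    have "(\<Sum>b<k. (if i = a then g i else 0) * X a b * (if j = b then g j else 0))
       = (\<Sum>b<k. if b = j then (if i = a then g i else 0) * X a b * g j else 0)"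
      by (intro sum.cong refl) auto
    then show ?thesis using assms by simp
  qed
  have "congr_mat k (\<lambda>i a. if i = a then g i else 0) X i j
     = (\<Sum>a<k. if a = i then g i * X a j * g j else 0)"
    unfolding congr_mat_def using inner by simp
  then show ?thesis using assms by simp
qed

lemma congr_mat_elimination:
  assumes "i < k" "j < k" "m < k"
  shows "congr_mat k (\<lambda>i a. (if i = a then 1 else 0) + \<beta> i * (if a = m then 1 else 0)) X i j
       = X i j + \<beta> j * X i m + \<beta> i * X m j + \<beta> i * \<beta> j * X m m"
proof -
  have "congr_mat k (\<lambda>i a. (if i = a then 1 else 0) + \<beta> i * (if a = m then 1 else 0)) X i j
     = (\<Sum>a<k. ((if i = a then 1 else 0) + \<beta> i * (if a = m then 1 else 0)) *
          (\<Sum>b<k. X a b * ((if j = b then 1 else 0) + \<beta> j * (if b = m then 1 else 0))))"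
    unfolding congr_mat_def by (simp add: sum_distrib_left mult.assoc)
  also have "\<dots> = (\<Sum>a<k. ((if i = a then 1 else 0) + \<beta> i * (if a = m then 1 else 0)) *
          (X a j + \<beta> j * X a m))"
    using assms by (simp add: sum_times_elim_column)
  also have "\<dots> = (X i j + \<beta> j * X i m) + \<beta> i * (X m j + \<beta> j * X m m)"
    by (rule sum_elim_column_times[OF assms(1) assms(3)])
  finally show ?thesis by (simp add: algebra_simps)
qed

text \<open>If beta_m = 0, the matrix I - e_m beta^T is the inverse transpose of I + beta e_m^T.\<close>

lemma elimination_inverse:
  assumes "b < (k::nat)" "c < k" "m < k" "\<beta> m = 0"
  shows "(\<Sum>j<k. ((if j = b then 1 else 0) + \<beta> j * (if b = m then 1 else 0)) *
            ((if j = c then 1 else 0) - (if j = m then 1 else 0) * \<beta> c)) = (if b = c then 1 else (0::real))"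
proof -
  have "(\<Sum>j<k. ((if j = b then 1 else 0) + \<beta> j * (if b = m then 1 else 0)) *
            ((if j = c then 1 else 0) - (if j = m then 1 else 0) * \<beta> c))
    = (\<Sum>j<k. (if j = b then (if b = c then 1 else 0) - (if b = m then 1 else 0) * \<beta> c else 0)
          + (if b = m then 1 else 0) * ((if j = c then \<beta> c else 0) - (if j = m then \<beta> m * \<beta> c else 0)))"
    by (intro sum.cong) (auto simp: algebra_simps)
  also have "\<dots> = (if b = c then 1 else 0) - (if b = m then 1 else 0) * \<beta> c
       + (if b = m then 1 else 0) * (\<beta> c - \<beta> m * \<beta> c)"
    using assms by (simp add: sum.distrib sum_subtractf sum_distrib_left[symmetric] sum.delta)
  also have "\<dots> = (if b = c then 1 else 0)" using assms by simp
  finally show ?thesis .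
qed

subsection \<open>Normalizing a psd factorization\<close>

definition psd_factorization ::
    "nat \<Rightarrow> nat \<Rightarrow> nat \<Rightarrow> (nat \<Rightarrow> nat \<Rightarrow> real) \<Rightarrow> (nat \<Rightarrow> nat \<Rightarrow> nat \<Rightarrow> real) \<Rightarrow> (nat \<Rightarrow> nat \<Rightarrow> nat \<Rightarrow> real) \<Rightarrow> bool" where
  "psd_factorization k p q M A B \<longleftrightarrow> (\<forall>i<p. psd_mat k (A i)) \<and> (\<forall>j<q. psd_mat k (B j)) \<and>
      (\<forall>i<p. \<forall>j<q. M i j = trace_inner k (A i) (B j))"

lemma has_psd_factorization_iff:
  "has_psd_factorization k p q M \<longleftrightarrow> (\<exists>A B. psd_factorization k p q M A B)"
  unfolding has_psd_factorization_def psd_factorization_def ..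

lemma psd_factorization_congr:
  assumes "psd_factorization k p q M A B"
    and inv: "\<And>b c. b < k \<Longrightarrow> c < k \<Longrightarrow> (\<Sum>j<k. G j b * H j c) = (if b = c then 1 else 0)"
  shows "psd_factorization k p q M (\<lambda>i. congr_mat k G (A i)) (\<lambda>j. congr_mat k H (B j))"
  using assms congr_mat_psd congr_mat_trace_inner[OF inv] unfolding psd_factorization_def by auto

text \<open>One step of symmetric Gaussian elimination: if the first m rows of S = sum_i A_i are
  already zero off the diagonal, a congruence clears row m as well.\<close>

lemma diagonalize_step:
  assumes F: "psd_factorization k p q M A B" and m: "m < k"
    and Z: "\<forall>r<m. \<forall>s<k. s \<noteq> r \<longrightarrow> mat_sum p A r s = 0"
  shows "\<exists>A' B'. psd_factorization k p q M A' B' \<and> (\<forall>r<Suc m. \<forall>s<k. s \<noteq> r \<longrightarrow> mat_sum p A' r s = 0)"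
proof -
  define S where "S = mat_sum p A"
  have S_psd: "psd_mat k S" unfolding S_def using F psd_mat_sum unfolding psd_factorization_def by blast
  have S_sym: "\<And>a b. a < k \<Longrightarrow> b < k \<Longrightarrow> S a b = S b a" using S_psd unfolding psd_mat_def by blast
  show ?thesis
  proof (cases "S m m = 0")
    case True
    text \<open>A zero pivot forces the whole row to vanish already.\<close>
    have "S m s = 0" if "s < k" for s using psd_zero_diag_row(1)[OF S_psd m that True] .
    then have "\<forall>r<Suc m. \<forall>s<k. s \<noteq> r \<longrightarrow> mat_sum p A r s = 0"
      using Z unfolding S_def by (metis less_Suc_eq)
    then show ?thesis using F by blast
  next
    case pivot: False
    define \<beta> where "\<beta> = (\<lambda>i. if i = m then 0 else - S i m / S m m)"
    define G where "G = (\<lambda>i a. (if i = a then 1 else 0) + \<beta> i * (if a = m then 1 else (0::real)))"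
    define H where "H = (\<lambda>i a. (if i = a then 1 else 0) - (if i = m then 1 else 0) * \<beta> a)"
    have inv: "(\<Sum>j<k. G j b * H j c) = (if b = c then 1 else 0)" if "b < k" "c < k" for b c
      unfolding G_def H_def by (rule elimination_inverse) (use m that in \<open>auto simp: \<beta>_def\<close>)
    have F': "psd_factorization k p q M (\<lambda>i. congr_mat k G (A i)) (\<lambda>j. congr_mat k H (B j))"
      by (rule psd_factorization_congr[OF F inv])
    have S': "mat_sum p (\<lambda>i. congr_mat k G (A i)) = congr_mat k G S"
      unfolding S_def by (rule mat_sum_congr_mat)
    have "mat_sum p (\<lambda>i. congr_mat k G (A i)) r s = 0" if r: "r < Suc m" and s: "s < k" "s \<noteq> r" for r s
    proof -
      have rk: "r < k" using r m by simp
      have e: "congr_mat k G S r s = S r s + \<beta> s * S r m + \<beta> r * S m s + \<beta> r * \<beta> s * S m m"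
        unfolding G_def by (rule congr_mat_elimination[OF rk s(1) m])
      show ?thesis
      proof (cases "r = m")
        case True
        then show ?thesis using S' e s S_sym[OF s(1) m] pivot by (simp add: \<beta>_def)
      next
        case False
        then have "S r m = 0" "S r s = 0" using Z r s m unfolding S_def by auto
        then show ?thesis using S' e False by (simp add: \<beta>_def)
      qed
    qed
    then show ?thesis using F' by blast
  qed
qed

lemma diagonalize:
  assumes "psd_factorization k p q M A B" "m \<le> k"
  shows "\<exists>A' B'. psd_factorization k p q M A' B' \<and> (\<forall>r<m. \<forall>s<k. s \<noteq> r \<longrightarrow> mat_sum p A' r s = 0)"
  using assms(2)
proof (induction m)
  case 0
  then show ?case using assms(1) by blast
next
  case (Suc m)
  then obtain A' B' where "psd_factorization k p q M A' B'" "\<forall>r<m. \<forall>s<k. s \<noteq> r \<longrightarrow> mat_sum p A' r s = 0"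
    by auto
  then show ?case using diagonalize_step[of k p q M A' B' m] Suc.prems by auto
qed

lemma normalize_diagonal:
  assumes F: "psd_factorization k p q M A B"
    and Z: "\<forall>r<k. \<forall>s<k. s \<noteq> r \<longrightarrow> mat_sum p A r s = 0"
  shows "\<exists>A' B'. psd_factorization k p q M A' B' \<and> (\<forall>r<k. \<forall>s<k. s \<noteq> r \<longrightarrow> mat_sum p A' r s = 0)
            \<and> (\<forall>r<k. mat_sum p A' r r = 0 \<or> mat_sum p A' r r = 1)"
proof -
  define S where "S = mat_sum p A"
  have S_psd: "psd_mat k S" unfolding S_def using F psd_mat_sum unfolding psd_factorization_def by blast
  define g where "g = (\<lambda>r. if S r r > 0 then 1 / sqrt (S r r) else 1)"
  have g_nonzero: "g r \<noteq> 0" for r unfolding g_def by auto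
  define G where "G = (\<lambda>i a. if i = a then g i else (0::real))"
  define H where "H = (\<lambda>i a. if i = a then 1 / g i else (0::real))"
  have inv: "(\<Sum>j<k. G j b * H j c) = (if b = c then 1 else 0)" if "b < k" "c < k" for b c
  proof -
    have "(\<Sum>j<k. G j b * H j c) = (\<Sum>j<k. if j = b then (if b = c then 1 else 0) else 0)"
      unfolding G_def H_def using g_nonzero by (intro sum.cong refl) auto
    then show ?thesis using that by (simp add: sum.delta)
  qed
  have F': "psd_factorization k p q M (\<lambda>i. congr_mat k G (A i)) (\<lambda>j. congr_mat k H (B j))"
    by (rule psd_factorization_congr[OF F inv])
  have scaled: "mat_sum p (\<lambda>i. congr_mat k G (A i)) r s = g r * S r s * g s" if "r < k" "s < k" for r s
    using mat_sum_congr_mat congr_mat_diagonal[OF that, of g S] unfolding G_def S_def by simp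
  have offdiag: "\<forall>r<k. \<forall>s<k. s \<noteq> r \<longrightarrow> mat_sum p (\<lambda>i. congr_mat k G (A i)) r s = 0"
    using scaled Z unfolding S_def by auto
  have diag: "mat_sum p (\<lambda>i. congr_mat k G (A i)) r r = 0 \<or> mat_sum p (\<lambda>i. congr_mat k G (A i)) r r = 1"
    if r: "r < k" for r
  proof (cases "S r r > 0")
    case True
    then have "g r * S r r * g r = 1" unfolding g_def by (simp add: field_simps)
    then show ?thesis using scaled[OF r r] by simp
  next
    case False
    then have "S r r = 0" using psd_diag_nonneg[OF S_psd r] by simp
    then show ?thesis using scaled[OF r r] by simp
  qed
  show ?thesis using F' offdiag diag by blast
qed

text \<open>Once sum_i A_i = D is a diagonal 0/1 matrix, every A_i has entries bounded by 1, and the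
  rows/columns of the B_j outside the support of D can be deleted; then
  sum_i M_ij = <D, B_j> = trace B_j bounds the entries of B_j.\<close>

lemma bounded_from_diagonal_sum:
  assumes F: "psd_factorization k p q M A B"
    and Z: "\<forall>r<k. \<forall>s<k. s \<noteq> r \<longrightarrow> mat_sum p A r s = 0"
    and D01: "\<forall>r<k. mat_sum p A r r = 0 \<or> mat_sum p A r r = 1"
  shows "\<exists>B'. psd_factorization k p q M A B' \<and> (\<forall>i<p. \<forall>a<k. \<forall>b<k. \<bar>A i a b\<bar> \<le> 1)
      \<and> (\<forall>j<q. \<forall>a<k. \<forall>b<k. \<bar>B' j a b\<bar> \<le> (\<Sum>i<p. M i j))"
proof -
  define D where "D = mat_sum p A"
  have A_psd: "\<And>i. i < p \<Longrightarrow> psd_mat k (A i)" and B_psd: "\<And>j. j < q \<Longrightarrow> psd_mat k (B j)"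
    and tr: "\<And>i j. i < p \<Longrightarrow> j < q \<Longrightarrow> M i j = trace_inner k (A i) (B j)"
    using F unfolding psd_factorization_def by auto
  have A_outside: "A i a b = 0" if "i < p" "a < k" "b < k" "D a a = 0 \<or> D b b = 0" for i a b
    using psd_summand_vanishes[where A=A, OF A_psd that(1-3)] that(4) unfolding D_def by blast
  define B' where "B' = (\<lambda>j a b. if D a a = 0 \<or> D b b = 0 then 0 else B j a b)"
  have B'_psd: "psd_mat k (B' j)" if "j < q" for j
    unfolding B'_def using psd_restrict[OF B_psd[OF that], of "\<lambda>a. D a a = 0"] by simp
  have tr': "M i j = trace_inner k (A i) (B' j)" if "i < p" "j < q" for i j
  proof -
    have "trace_inner k (A i) (B' j) = trace_inner k (A i) (B j)"
      unfolding trace_inner_def B'_def using A_outside[OF that(1)] by (intro sum.cong refl) auto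
    then show ?thesis using tr that by simp
  qed
  have F': "psd_factorization k p q M A B'"
    unfolding psd_factorization_def using A_psd B'_psd tr' by auto
  have bound_A: "\<bar>A i a b\<bar> \<le> 1" if "i < p" "a < k" "b < k" for i a b
  proof (rule psd_entry_abs_le[OF A_psd[OF that(1)] that(2,3)])
    show "A i a a \<le> 1" using psd_diag_le_mat_sum[where A=A, OF A_psd that(1,2)] D01 that by force
    show "A i b b \<le> 1" using psd_diag_le_mat_sum[where A=A, OF A_psd that(1,3)] D01 that by force
  qed
  have bound_B: "\<bar>B' j a b\<bar> \<le> (\<Sum>i<p. M i j)" if "j < q" "a < k" "b < k" for j a b
  proof -
    have "(\<Sum>i<p. M i j) = (\<Sum>i<p. trace_inner k (A i) (B' j))" using tr' that by simp
    also have "\<dots> = trace_inner k D (B' j)" unfolding D_def by (rule trace_inner_mat_sum)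
    also have "\<dots> = (\<Sum>c<k. D c c * B' j c c)" unfolding trace_inner_def
    proof (intro sum.cong refl)
      fix c assume "c \<in> {..<k}"
      then show "(\<Sum>d<k. D c d * B' j d c) = D c c * B' j c c"
        by (intro sum_single_term) (use Z in \<open>auto simp: D_def\<close>)
    qed
    also have "\<dots> = (\<Sum>c<k. B' j c c)"
      by (intro sum.cong refl) (use D01 in \<open>auto simp: B'_def D_def\<close>)
    finally have trace_eq: "(\<Sum>i<p. M i j) = (\<Sum>c<k. B' j c c)" .
    have "B' j c c \<le> (\<Sum>i<p. M i j)" if "c < k" for c
      unfolding trace_eq by (rule member_le_sum) (use that B'_psd[OF \<open>j < q\<close>] psd_diag_nonneg in auto)
    then show ?thesis using psd_entry_abs_le[OF B'_psd[OF that(1)] that(2,3)] that by auto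
  qed
  show ?thesis using F' bound_A bound_B by blast
qed

lemma bounded_psd_factorization:
  assumes "psd_factorization k p q M A B"
  shows "\<exists>A B. psd_factorization k p q M A B \<and> (\<forall>i<p. \<forall>a<k. \<forall>b<k. \<bar>A i a b\<bar> \<le> 1)
      \<and> (\<forall>j<q. \<forall>a<k. \<forall>b<k. \<bar>B j a b\<bar> \<le> (\<Sum>i<p. M i j))"
proof -
  obtain A1 B1 where F1: "psd_factorization k p q M A1 B1"
    and Z1: "\<forall>r<k. \<forall>s<k. s \<noteq> r \<longrightarrow> mat_sum p A1 r s = 0"
    using diagonalize[OF assms order.refl] by auto
  obtain A2 B2 where F2: "psd_factorization k p q M A2 B2"
    and Z2: "\<forall>r<k. \<forall>s<k. s \<noteq> r \<longrightarrow> mat_sum p A2 r s = 0"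
    and D2: "\<forall>r<k. mat_sum p A2 r r = 0 \<or> mat_sum p A2 r r = 1"
    using normalize_diagonal[OF F1 Z1] by auto
  show ?thesis using bounded_from_diagonal_sum[OF F2 Z2 D2] by blast
qed

text \<open>Padding the factors with zeros shows that factorizations persist in larger sizes.\<close>

lemma has_psd_factorization_mono:
  assumes "has_psd_factorization k0 p q M" "k0 \<le> k"
  shows "has_psd_factorization k p q M"
proof -
  obtain A B where A: "\<forall>i<p. psd_mat k0 (A i)" and B: "\<forall>j<q. psd_mat k0 (B j)"
    and T: "\<forall>i<p. \<forall>j<q. M i j = trace_inner k0 (A i) (B j)"
    using assms(1) unfolding has_psd_factorization_def by blast
  define pad where "pad = (\<lambda>(X::nat \<Rightarrow> nat \<Rightarrow> real) a b. if a < k0 \<and> b < k0 then X a b else 0)"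
  have sum_pad: "(\<Sum>a<k. f a) = (\<Sum>a<k0. f a)" if "\<And>a. k0 \<le> a \<Longrightarrow> f a = (0::real)" for f
    by (rule sum.mono_neutral_right) (use assms(2) that in auto)
  have pad_psd: "psd_mat k (pad X)" if "psd_mat k0 X" for X
    unfolding psd_mat_def
  proof (intro conjI allI impI)
    fix a b assume "a < k" "b < k"
    then show "pad X a b = pad X b a" using that unfolding pad_def psd_mat_def by auto
  next
    fix x :: "nat \<Rightarrow> real"
    have "(\<Sum>a<k. \<Sum>b<k. x a * pad X a b * x b) = (\<Sum>a<k0. \<Sum>b<k0. x a * X a b * x b)"
      by (simp add: sum_pad pad_def)
    also have "0 \<le> \<dots>" using that unfolding psd_mat_def by blast
    finally show "0 \<le> (\<Sum>a<k. \<Sum>b<k. x a * pad X a b * x b)" .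
  qed
  have pad_trace: "trace_inner k (pad X) (pad Y) = trace_inner k0 X Y" for X Y
    unfolding trace_inner_def by (simp add: sum_pad pad_def)
  show ?thesis unfolding has_psd_factorization_def
    by (rule exI[of _ "\<lambda>i. pad (A i)"], rule exI[of _ "\<lambda>j. pad (B j)"])
      (use A B T pad_psd pad_trace in auto)
qed

text \<open>A nonnegative p x q matrix has the diagonal factorization of size q with
  A_i = diag(M_i1, ..., M_iq) and B_j = e_j e_j^T; in particular its psd rank is attained,
  i.e. it admits a factorization of size psd_rank.\<close>

lemma has_psd_factorization_diagonal:
  assumes "nonneg_mat p q M"
  shows "has_psd_factorization q p q M"
proof -
  define A where "A = (\<lambda>i a b. if a = b then M i a else (0::real))"
  define B where "B = (\<lambda>(j::nat) a b. if a = b then (if a = j then 1 else 0) else (0::real))"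
  have "psd_mat q (A i)" if "i < p" for i
    unfolding A_def by (rule psd_diagonal) (use assms that in \<open>auto simp: nonneg_mat_def\<close>)
  moreover have "psd_mat q (B j)" for j
    unfolding B_def by (rule psd_diagonal) auto
  moreover have "M i j = trace_inner q (A i) (B j)" if "i < p" "j < q" for i j
    unfolding A_def B_def trace_inner_diagonal using that
    by (simp add: if_distrib[of "\<lambda>y. _ * y"] cong: if_cong)
  ultimately show ?thesis unfolding has_psd_factorization_def by blast
qed

lemma has_psd_factorization_of_psd_rank:
  assumes "nonneg_mat p q M" "psd_rank p q M \<le> k"
  shows "has_psd_factorization k p q M"
proof -
  have "has_psd_factorization (psd_rank p q M) p q M"
    unfolding psd_rank_def by (rule LeastI_ex) (use has_psd_factorization_diagonal[OF assms(1)] in blast)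
  then show ?thesis using has_psd_factorization_mono assms(2) by blast
qed

subsection \<open>Limits of factorizations\<close>

lemma common_convergent_subseq:
  fixes f :: "nat \<Rightarrow> 'x \<Rightarrow> real"
  assumes "finite F" "\<And>x. x \<in> F \<Longrightarrow> \<exists>C. \<forall>n. \<bar>f n x\<bar> \<le> C"
  shows "\<exists>r. strict_mono r \<and> (\<forall>x\<in>F. \<exists>l. (\<lambda>n. f (r n) x) \<longlonglongrightarrow> l)"
  using assms
proof (induction F rule: finite_induct)
  case empty
  then show ?case by (auto intro: exI[of _ id] simp: strict_mono_def)
next
  case (insert x F)
  then obtain r1 where r1: "strict_mono r1" "\<forall>y\<in>F. \<exists>l. (\<lambda>n. f (r1 n) y) \<longlonglongrightarrow> l" by auto
  obtain C where "\<forall>n. \<bar>f n x\<bar> \<le> C" using insert.prems by blast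
  then have "bounded (range (\<lambda>n. f (r1 n) x))" unfolding bounded_iff by auto
  then obtain l r2 where r2: "strict_mono (r2::nat \<Rightarrow> nat)" "((\<lambda>n. f (r1 n) x) \<circ> r2) \<longlonglongrightarrow> l"
    using bounded_imp_convergent_subsequence by blast
  have "\<exists>l. (\<lambda>n. f ((r1 \<circ> r2) n) y) \<longlonglongrightarrow> l" if y: "y \<in> insert x F" for y
  proof (cases "y = x")
    case True
    then show ?thesis using r2(2) by (auto simp: o_def)
  next
    case False
    then obtain l' where "(\<lambda>n. f (r1 n) y) \<longlonglongrightarrow> l'" using r1(2) y by auto
    from LIMSEQ_subseq_LIMSEQ[OF this r2(1)] show ?thesis by (auto simp: o_def)
  qed
  then show ?case using strict_mono_o[OF r1(1) r2(1)] by blast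
qed

lemma psd_mat_limit:
  assumes lim: "\<And>a b. a < k \<Longrightarrow> b < k \<Longrightarrow> (\<lambda>n. Y n a b) \<longlonglongrightarrow> X a b"
    and Y: "\<And>n. psd_mat k (Y n)"
  shows "psd_mat k X"
  unfolding psd_mat_def
proof (intro conjI allI impI)
  fix a b assume ab: "a < k" "b < k"
  have "(\<lambda>n. Y n a b) = (\<lambda>n. Y n b a)" using Y ab unfolding psd_mat_def by auto
  then show "X a b = X b a" using lim[OF ab] lim[OF ab(2,1)] LIMSEQ_unique by metis
next
  fix x :: "nat \<Rightarrow> real"
  have "(\<lambda>n. \<Sum>a<k. \<Sum>b<k. x a * Y n a b * x b) \<longlonglongrightarrow> (\<Sum>a<k. \<Sum>b<k. x a * X a b * x b)"
    by (intro tendsto_sum tendsto_mult tendsto_const) (use lim in auto)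
  moreover have "\<forall>n. 0 \<le> (\<Sum>a<k. \<Sum>b<k. x a * Y n a b * x b)" using Y unfolding psd_mat_def by blast
  ultimately show "0 \<le> (\<Sum>a<k. \<Sum>b<k. x a * X a b * x b)"
    by (intro LIMSEQ_le_const) auto
qed

lemma psd_factorization_limit:
  assumes F: "\<And>n. psd_factorization k p q (Ms n) (A n) (B n)"
    and lim_M: "\<And>i j. i < p \<Longrightarrow> j < q \<Longrightarrow> (\<lambda>n. Ms n i j) \<longlonglongrightarrow> M i j"
    and lim_A: "\<And>i a b. i < p \<Longrightarrow> a < k \<Longrightarrow> b < k \<Longrightarrow> (\<lambda>n. A n i a b) \<longlonglongrightarrow> A_lim i a b"
    and lim_B: "\<And>j a b. j < q \<Longrightarrow> a < k \<Longrightarrow> b < k \<Longrightarrow> (\<lambda>n. B n j a b) \<longlonglongrightarrow> B_lim j a b"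
  shows "psd_factorization k p q M A_lim B_lim"
proof -
  have A_psd: "psd_mat k (A_lim i)" if "i < p" for i
    by (rule psd_mat_limit[where Y="\<lambda>n. A n i"]) (use lim_A that F in \<open>auto simp: psd_factorization_def\<close>)
  have B_psd: "psd_mat k (B_lim j)" if "j < q" for j
    by (rule psd_mat_limit[where Y="\<lambda>n. B n j"]) (use lim_B that F in \<open>auto simp: psd_factorization_def\<close>)
  have trace: "M i j = trace_inner k (A_lim i) (B_lim j)" if "i < p" "j < q" for i j
  proof -
    have "(\<lambda>n. trace_inner k (A n i) (B n j)) \<longlonglongrightarrow> trace_inner k (A_lim i) (B_lim j)"
      unfolding trace_inner_def by (intro tendsto_sum tendsto_mult) (use lim_A lim_B that in auto)
    moreover have "(\<lambda>n. trace_inner k (A n i) (B n j)) = (\<lambda>n. Ms n i j)"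
      using F that unfolding psd_factorization_def by auto
    ultimately show ?thesis using lim_M[OF that] LIMSEQ_unique by metis
  qed
  show ?thesis unfolding psd_factorization_def using A_psd B_psd trace by blast
qed

lemma bounded_psd_factorizations_limit:
  assumes F: "\<And>n. psd_factorization k p q (Ms n) (A n) (B n)"
    and lim_M: "\<And>i j. i < p \<Longrightarrow> j < q \<Longrightarrow> (\<lambda>n. Ms n i j) \<longlonglongrightarrow> M i j"
    and bound_A: "\<And>i a b. i < p \<Longrightarrow> a < k \<Longrightarrow> b < k \<Longrightarrow> \<exists>C. \<forall>n. \<bar>A n i a b\<bar> \<le> C"
    and bound_B: "\<And>j a b. j < q \<Longrightarrow> a < k \<Longrightarrow> b < k \<Longrightarrow> \<exists>C. \<forall>n. \<bar>B n j a b\<bar> \<le> C"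
  shows "has_psd_factorization k p q M"
proof -
  define entry where "entry = (\<lambda>n. case_sum (\<lambda>(i, a, b). A n i a b) (\<lambda>(j, a, b). B n j a b))"
  define I where "I = Inl ` ({..<p} \<times> {..<k} \<times> {..<k}) \<union> Inr ` ({..<q} \<times> {..<k} \<times> {..<k})"
  have "finite I" unfolding I_def by auto
  moreover have "\<exists>C. \<forall>n. \<bar>entry n x\<bar> \<le> C" if "x \<in> I" for x
    using that bound_A bound_B unfolding I_def entry_def by auto
  ultimately obtain r where r: "strict_mono r" "\<forall>x\<in>I. \<exists>l. (\<lambda>n. entry (r n) x) \<longlonglongrightarrow> l"
    using common_convergent_subseq by blast
  have lim_A: "(\<lambda>n. A (r n) i a b) \<longlonglongrightarrow> lim (\<lambda>n. A (r n) i a b)" if "i < p" "a < k" "b < k" for i a b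
  proof -
    have "Inl (i, a, b) \<in> I" using that unfolding I_def by auto
    then obtain l where "(\<lambda>n. A (r n) i a b) \<longlonglongrightarrow> l" using r(2) unfolding entry_def by fastforce
    then show ?thesis by (metis limI)
  qed
  have lim_B: "(\<lambda>n. B (r n) j a b) \<longlonglongrightarrow> lim (\<lambda>n. B (r n) j a b)" if "j < q" "a < k" "b < k" for j a b
  proof -
    have "Inr (j, a, b) \<in> I" using that unfolding I_def by auto
    then obtain l where "(\<lambda>n. B (r n) j a b) \<longlonglongrightarrow> l" using r(2) unfolding entry_def by fastforce
    then show ?thesis by (metis limI)
  qed
  have "psd_factorization k p q M (\<lambda>i a b. lim (\<lambda>n. A (r n) i a b)) (\<lambda>j a b. lim (\<lambda>n. B (r n) j a b))"
  proof (rule psd_factorization_limit[where Ms="Ms \<circ> r"])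
    show "(\<lambda>n. (Ms \<circ> r) n i j) \<longlonglongrightarrow> M i j" if "i < p" "j < q" for i j
      using LIMSEQ_subseq_LIMSEQ[OF lim_M[OF that] r(1)] by (simp add: o_def)
  qed (use F lim_A lim_B in auto)
  then show ?thesis unfolding has_psd_factorization_iff by blast
qed

text \<open>A convergent sequence of matrices of psd rank at most k admits size-k factorizations
  whose entries are bounded uniformly in n: by 1 for the A's and by the (convergent, hence
  bounded) column sums of M^n for the B's.\<close>

lemma uniformly_bounded_psd_factorizations:
  assumes nonneg: "\<And>n. nonneg_mat p q (Ms n)"
    and lim_M: "\<And>i j. i < p \<Longrightarrow> j < q \<Longrightarrow> (\<lambda>n. Ms n i j) \<longlonglongrightarrow> M i j"
    and rank: "\<And>n. psd_rank p q (Ms n) \<le> k"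
  obtains A B where "\<And>n. psd_factorization k p q (Ms n) (A n) (B n)"
    and "\<And>i a b. i < p \<Longrightarrow> a < k \<Longrightarrow> b < k \<Longrightarrow> \<exists>C. \<forall>n. \<bar>A n i a b\<bar> \<le> C"
    and "\<And>j a b. j < q \<Longrightarrow> a < k \<Longrightarrow> b < k \<Longrightarrow> \<exists>C. \<forall>n. \<bar>B n j a b\<bar> \<le> C"
proof -
  define good where "good n A B \<longleftrightarrow> psd_factorization k p q (Ms n) A B
      \<and> (\<forall>i<p. \<forall>a<k. \<forall>b<k. \<bar>A i a b\<bar> \<le> 1) \<and> (\<forall>j<q. \<forall>a<k. \<forall>b<k. \<bar>B j a b\<bar> \<le> (\<Sum>i<p. Ms n i j))"
    for n A B
  have "\<forall>n. \<exists>A B. good n A B"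
  proof
    fix n
    obtain A0 B0 where "psd_factorization k p q (Ms n) A0 B0"
      using has_psd_factorization_of_psd_rank[OF nonneg rank] unfolding has_psd_factorization_iff by blast
    then show "\<exists>A B. good n A B" unfolding good_def by (rule bounded_psd_factorization)
  qed
  then have "\<exists>A. \<forall>n. \<exists>B. good n (A n) B" by (rule choice)
  then obtain A where "\<forall>n. \<exists>B. good n (A n) B" ..
  then have "\<exists>B. \<forall>n. good n (A n) (B n)" by (rule choice)
  then obtain B where good: "\<And>n. good n (A n) (B n)" by blast
  have column_sum_bound: "\<exists>C. \<forall>n. (\<Sum>i<p. Ms n i j) \<le> C" if "j < q" for j
  proof -
    have "(\<lambda>n. \<Sum>i<p. Ms n i j) \<longlonglongrightarrow> (\<Sum>i<p. M i j)"
      using lim_M that by (intro tendsto_sum) auto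
    then have "Bseq (\<lambda>n. \<Sum>i<p. Ms n i j)" by (rule convergent_imp_Bseq[OF convergentI])
    then obtain C where "\<forall>n. norm (\<Sum>i<p. Ms n i j) \<le> C" unfolding Bseq_def by blast
    then show ?thesis by (auto intro: order_trans[OF abs_ge_self])
  qed
  show ?thesis
  proof
    show "psd_factorization k p q (Ms n) (A n) (B n)" for n using good unfolding good_def by blast
    show "\<exists>C. \<forall>n. \<bar>A n i a b\<bar> \<le> C" if "i < p" "a < k" "b < k" for i a b
      using good that unfolding good_def by blast
    show "\<exists>C. \<forall>n. \<bar>B n j a b\<bar> \<le> C" if jab: "j < q" "a < k" "b < k" for j a b
    proof -
      obtain C where "\<forall>n. (\<Sum>i<p. Ms n i j) \<le> C" using column_sum_bound[OF jab(1)] by blast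
      then have "\<forall>n. \<bar>B n j a b\<bar> \<le> C" using good jab unfolding good_def by (meson order_trans)
      then show ?thesis by blast
    qed
  qed
qed

theorem theorem2p9:
  fixes p q k :: nat
    and Ms :: "nat \<Rightarrow> nat \<Rightarrow> nat \<Rightarrow> real"
    and M :: "nat \<Rightarrow> nat \<Rightarrow> real"
  assumes "\<And>n. nonneg_mat p q (Ms n)"
    and "nonneg_mat p q M"
    and "\<And>i j. i < p \<Longrightarrow> j < q \<Longrightarrow> (\<lambda>n. Ms n i j) \<longlonglongrightarrow> M i j"
    and "\<And>n. psd_rank p q (Ms n) \<le> k"
  shows "psd_rank p q M \<le> k"
proof -
  obtain A B where F: "\<And>n. psd_factorization k p q (Ms n) (A n) (B n)"
    and bound_A: "\<And>i a b. i < p \<Longrightarrow> a < k \<Longrightarrow> b < k \<Longrightarrow> \<exists>C. \<forall>n. \<bar>A n i a b\<bar> \<le> C"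
    and bound_B: "\<And>j a b. j < q \<Longrightarrow> a < k \<Longrightarrow> b < k \<Longrightarrow> \<exists>C. \<forall>n. \<bar>B n j a b\<bar> \<le> C"
    using uniformly_bounded_psd_factorizations[OF assms(1,3,4)] by blast
  have "has_psd_factorization k p q M"
    using bounded_psd_factorizations_limit[OF F assms(3) bound_A bound_B] .
  then show ?thesis unfolding psd_rank_def by (rule Least_le)
qed

end
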